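(* Let $\mathbb{X},\mathbb{Y}$ be $n$-dimensional real polyhedral Banach spaces, $F$ a facet of $B_{\mathbb{X}}$, and $T:\mathbb{X}\to\mathbb{Y}$ a bijective linear operator that preserves Birkhoff–James orthogonality at each point of $\operatorname{Int}_r F$. Let $u\in\operatorname{Int}_r F$. Then there is a facet $G$ of $B_{\mathbb{Y}}$ such that $\frac{1}{\|Tu\|}T(\operatorname{Int}_r F)\subseteq\operatorname{Int}_r G$.
   Context: A finite-dimensional Banach space is polyhedral if its closed unit ball has finitely many extreme points. A convex subset $F$ of a convex set $G$ is a face of $G$ if whenever $a,b\in G$, $0<t<1$, $(1-t)a+tb\in F$, then $a,b\in F$; its dimension is $\dim\operatorname{span}\{a-b:a,b\in F\}$; a facet is a maximal proper face (for an $n$-dimensional polyhedral space, an $(n-1)$-dimensional face of the unit ball). $\operatorname{aff}(D)$ is the affine hull of $D$, and $\operatorname{Int}_r D=\{x\in D:\exists\varepsilon>0,\ B(x,\varepsilon)\cap\operatorname{aff}(D)\subseteq D\}$ is the relative interior. $u\perp_B v$ means $\|u+\lambda v\|\ge\|u\|$ for all real $\lambda$; $T$ preserves Birkhoff–James orthogonality at $x$ if $x\perp_B w\Rightarrow Tx\perp_B Tw$ for all $w$. *)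

theory Defs
  imports "HOL-Analysis.Analysis"
begin

text \<open>A norm on the vector space real^'n (any n-dimensional real normed space is
isometric to real^'n equipped with some norm).\<close>
definition is_norm :: "('a::real_vector \<Rightarrow> real) \<Rightarrow> bool" where
  "is_norm N \<longleftrightarrow> (\<forall>x. 0 \<le> N x) \<and> (\<forall>x. N x = 0 \<longleftrightarrow> x = 0)
     \<and> (\<forall>c x. N (c *\<^sub>R x) = \<bar>c\<bar> * N x) \<and> (\<forall>x y. N (x + y) \<le> N x + N y)"

definition unit_ball :: "('a::real_vector \<Rightarrow> real) \<Rightarrow> 'a set" where
  "unit_ball N = {x. N x \<le> 1}"

definition polyhedral :: "('a::real_vector \<Rightarrow> real) \<Rightarrow> bool" where
  "polyhedral N \<longleftrightarrow> finite {x. x extreme_point_of unit_ball N}"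

definition bj_orth :: "('a::real_vector \<Rightarrow> real) \<Rightarrow> 'a \<Rightarrow> 'a \<Rightarrow> bool" where
  "bj_orth N u v \<longleftrightarrow> (\<forall>t::real. N (u + t *\<^sub>R v) \<ge> N u)"

definition preserves_bj_at ::
  "('a::real_vector \<Rightarrow> real) \<Rightarrow> ('b::real_vector \<Rightarrow> real) \<Rightarrow> ('a \<Rightarrow> 'b) \<Rightarrow> 'a \<Rightarrow> bool" where
  "preserves_bj_at NX NY T x \<longleftrightarrow> (\<forall>w. bj_orth NX x w \<longrightarrow> bj_orth NY (T x) (T w))"

end

theory Submission imports Defs begin

text \<open>
A proper face F of the unit ball of X lies on the unit sphere and its affine hull misses the open
ball, so every point of F is Birkhoff--James orthogonal to every direction of that affine hull.
For a facet this hull is a hyperplane {x. a \<bullet> x = 1}. Transporting the orthogonalities by T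
shows that the norm of Y is constant, equal to \<parallel>Tu\<parallel>, on T(rel int F), and that
y \<mapsto> \<parallel>Tu\<parallel> (a \<bullet> T\<inverse>y) is a linear functional bounded by the norm of Y. The rescaled image of
rel int F therefore lies in the face G of B_Y exposed by this functional; being relatively open
of dimension n - 1, it forces G to be a facet and lies in its relative interior.
\<close>

lemma is_normD:
  assumes "is_norm N"
  shows "N x \<ge> 0" "N x = 0 \<longleftrightarrow> x = 0" "N (c *\<^sub>R x) = \<bar>c\<bar> * N x" "N (x + y) \<le> N x + N y"
  using assms unfolding is_norm_def by auto

lemma convex_unit_ball:
  assumes "is_norm N" shows "convex (unit_ball N)"
  unfolding convex_def unit_ball_def
proof (intro allI impI ballI, clarsimp)
  fix x y and u v :: real
  assume h: "N x \<le> 1" "N y \<le> 1" "0 \<le> u" "0 \<le> v" "u + v = 1"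
  have "N (u *\<^sub>R x + v *\<^sub>R y) \<le> N (u *\<^sub>R x) + N (v *\<^sub>R y)" by (rule is_normD(4)[OF assms])
  also have "\<dots> = u * N x + v * N y" using h by (simp add: is_normD(3)[OF assms])
  also have "\<dots> \<le> u + v" using h by (intro add_mono mult_left_le) auto
  finally show "N (u *\<^sub>R x + v *\<^sub>R y) \<le> 1" using h by simp
qed

lemma zero_in_unit_ball: "is_norm N \<Longrightarrow> 0 \<in> unit_ball N"
  using is_normD(2)[of N 0] by (simp add: unit_ball_def)

lemma affine_hull_unit_ball:
  fixes N :: "'a::real_vector \<Rightarrow> real"
  assumes N: "is_norm N" shows "affine hull (unit_ball N) = UNIV"
proof -
  have "z \<in> affine hull (unit_ball N)" for z
  proof -
    define k where "k = N z + 1"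
    have k: "k > 0" using is_normD(1)[OF N, of z] by (simp add: k_def)
    have "N ((1/k) *\<^sub>R z) \<le> 1" using is_normD(3)[OF N, of "1/k" z] k by (simp add: k_def)
    then have "(1/k) *\<^sub>R z \<in> affine hull (unit_ball N)" by (simp add: unit_ball_def hull_inc)
    then have "(1 - k) *\<^sub>R 0 + k *\<^sub>R ((1/k) *\<^sub>R z) \<in> affine hull (unit_ball N)"
      using zero_in_unit_ball[OF N] by (intro mem_affine) (auto simp: hull_inc)
    then show ?thesis using k by simp
  qed
  then show ?thesis by auto
qed

lemma aff_dim_unit_ball:
  fixes N :: "'a::euclidean_space \<Rightarrow> real"
  assumes "is_norm N" shows "aff_dim (unit_ball N) = int DIM('a)"
  by (metis aff_dim_UNIV aff_dim_affine_hull affine_hull_unit_ball assms)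

lemma rel_interior_unit_ballI:
  fixes N :: "'a::euclidean_space \<Rightarrow> real"
  assumes N: "is_norm N" and z: "N z < 1"
  shows "z \<in> rel_interior (unit_ball N)"
proof -
  have "\<exists>e>1. (1 - e) *\<^sub>R x + e *\<^sub>R z \<in> unit_ball N" if x: "N x \<le> 1" for x
  proof (intro exI conjI)
    define e where "e = 2 / (1 + N z)"
    have Nz: "0 \<le> N z" using is_normD(1)[OF N] .
    show e1: "e > 1" using z Nz by (simp add: e_def field_simps)
    have "N ((1 - e) *\<^sub>R x + e *\<^sub>R z) \<le> N ((1 - e) *\<^sub>R x) + N (e *\<^sub>R z)"
      by (rule is_normD(4)[OF N])
    also have "\<dots> = (e - 1) * N x + e * N z" using e1 by (simp add: is_normD(3)[OF N])
    also have "\<dots> \<le> (e - 1) + e * N z" using x e1 by simp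
    also have "\<dots> = 1" using Nz by (simp add: e_def divide_simps)
    finally show "(1 - e) *\<^sub>R x + e *\<^sub>R z \<in> unit_ball N" by (simp add: unit_ball_def)
  qed
  then show ?thesis
    using convex_unit_ball[OF N] zero_in_unit_ball[OF N]
    by (subst convex_rel_interior_iff) (auto simp: unit_ball_def)
qed

lemma proper_face_of_unit_ball_norm_eq_1:
  fixes N :: "'a::euclidean_space \<Rightarrow> real"
  assumes N: "is_norm N" and F: "F face_of unit_ball N" "F \<noteq> unit_ball N" and y: "y \<in> F"
  shows "N y = 1"
proof -
  have "N y \<le> 1" using face_of_imp_subset[OF F(1)] y by (auto simp: unit_ball_def)
  moreover have "y \<notin> rel_interior (unit_ball N)"
    using face_of_disjoint_rel_interior[OF F] y by blast
  ultimately show ?thesis using rel_interior_unit_ballI[OF N] by (meson antisym not_less)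
qed

text \<open>A face of a convex set is the trace of its affine hull on the set.\<close>
lemma affine_hull_proper_face_of_unit_ball_norm_ge_1:
  fixes N :: "'a::euclidean_space \<Rightarrow> real"
  assumes N: "is_norm N" and F: "F face_of unit_ball N" "F \<noteq> unit_ball N"
    and y: "y \<in> affine hull F"
  shows "1 \<le> N y"
proof (rule ccontr)
  assume "\<not> 1 \<le> N y"
  then have "y \<in> affine hull F \<inter> unit_ball N" using y by (simp add: unit_ball_def)
  then have "y \<in> F" using face_of_imp_eq_affine_Int[OF convex_unit_ball[OF N] F(1)] by blast
  then show False using proper_face_of_unit_ball_norm_eq_1[OF N F] \<open>\<not> 1 \<le> N y\<close> by simp
qed

lemma bj_orth_proper_face_of_unit_ball:
  fixes N :: "'a::euclidean_space \<Rightarrow> real"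
  assumes N: "is_norm N" and F: "F face_of unit_ball N" "F \<noteq> unit_ball N"
    and x: "x \<in> F" and y: "y \<in> affine hull F"
  shows "bj_orth N x (y - x)"
  unfolding bj_orth_def
proof
  fix t :: real
  have "x + t *\<^sub>R (y - x) = (1 - t) *\<^sub>R x + t *\<^sub>R y" by (simp add: algebra_simps)
  also have "\<dots> \<in> affine hull F" using x y by (intro mem_affine) (auto simp: hull_inc)
  finally show "N x \<le> N (x + t *\<^sub>R (y - x))"
    using affine_hull_proper_face_of_unit_ball_norm_ge_1[OF N F]
      proper_face_of_unit_ball_norm_eq_1[OF N F x] by simp
qed

lemma facet_of_unit_ball_affine_hull:
  fixes N :: "'a::euclidean_space \<Rightarrow> real"
  assumes N: "is_norm N" and F: "F facet_of unit_ball N"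
  obtains a where "affine hull F = {x. a \<bullet> x = 1}"
proof -
  have face: "F face_of unit_ball N" "F \<noteq> unit_ball N"
    and "aff_dim F = DIM('a) - 1"
    using F aff_dim_unit_ball[OF N] by (auto simp: facet_of_def)
  then obtain a b where a: "a \<noteq> 0" "affine hull F = {x. a \<bullet> x = b}"
    using aff_dim_eq_hyperplane by blast
  have "0 \<notin> affine hull F"
    using affine_hull_proper_face_of_unit_ball_norm_ge_1[OF N face, of 0] is_normD(2)[OF N, of 0]
    by auto
  then have "b \<noteq> 0" using a by auto
  then have "affine hull F = {x. (a /\<^sub>R b) \<bullet> x = 1}" using a by (auto simp: field_simps)
  then show thesis using that by blast
qed

lemma bj_preserving_norm_le_affine_hull:
  fixes NX :: "'a::euclidean_space \<Rightarrow> real" and NY :: "'b::real_vector \<Rightarrow> real"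
  assumes NX: "is_norm NX" and F: "F face_of unit_ball NX" "F \<noteq> unit_ball NX"
    and T: "linear T" and x: "x \<in> F" and pres: "preserves_bj_at NX NY T x"
    and y: "y \<in> affine hull F"
  shows "NY (T x) \<le> NY (T y)"
proof -
  have "bj_orth NY (T x) (T (y - x))"
    using pres bj_orth_proper_face_of_unit_ball[OF NX F x y] by (simp add: preserves_bj_at_def)
  then have "NY (T x) \<le> NY (T x + 1 *\<^sub>R T (y - x))" unfolding bj_orth_def by blast
  then show ?thesis by (simp add: linear_diff[OF T])
qed

lemma bj_preserving_functional_bound:
  fixes NX :: "'a::euclidean_space \<Rightarrow> real" and NY :: "'b::real_vector \<Rightarrow> real"
  assumes NX: "is_norm NX" and NY: "is_norm NY"
    and F: "F face_of unit_ball NX" "F \<noteq> unit_ball NX" and aF: "affine hull F = {x. a \<bullet> x = 1}"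
    and T: "linear T" and u: "u \<in> F" and pres: "preserves_bj_at NX NY T u"
  shows "NY (T u) * (a \<bullet> z) \<le> NY (T z)"
proof (cases "a \<bullet> z > 0")
  case True
  have "(1 / (a \<bullet> z)) *\<^sub>R z \<in> affine hull F" using True by (simp add: aF)
  then have "NY (T u) \<le> NY (T ((1 / (a \<bullet> z)) *\<^sub>R z))"
    by (rule bj_preserving_norm_le_affine_hull[OF NX F T u pres])
  also have "\<dots> = NY (T z) / (a \<bullet> z)"
    using True by (simp add: linear_scale[OF T] is_normD(3)[OF NY])
  finally show ?thesis using True by (simp add: field_simps)
next
  case False
  then have "NY (T u) * (a \<bullet> z) \<le> 0"
    using is_normD(1)[OF NY] by (simp add: mult_nonneg_nonpos)
  then show ?thesis using is_normD(1)[OF NY, of "T z"] by linarith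
qed

lemma bj_preserving_norm_eq_on_face:
  fixes NX :: "'a::euclidean_space \<Rightarrow> real" and NY :: "'b::real_vector \<Rightarrow> real"
  assumes NX: "is_norm NX" and F: "F face_of unit_ball NX" "F \<noteq> unit_ball NX" and T: "linear T"
    and x: "x \<in> F" "preserves_bj_at NX NY T x" and y: "y \<in> F" "preserves_bj_at NX NY T y"
  shows "NY (T x) = NY (T y)"
  using bj_preserving_norm_le_affine_hull[OF NX F T x, of y]
    bj_preserving_norm_le_affine_hull[OF NX F T y, of x] x(1) y(1)
  by (simp add: hull_inc)

lemma adjoint_inv_inner_bij_linear:
  fixes T :: "'a::euclidean_space \<Rightarrow> 'a"
  assumes "linear T" "bij T"
  shows "adjoint (inv T) a \<bullet> T z = a \<bullet> z"
proof -
  have "linear (inv T)" using assms inj_linear_imp_inv_linear bij_is_inj by blast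
  then have "T z \<bullet> adjoint (inv T) a = inv T (T z) \<bullet> a" by (rule adjoint_works)
  also have "\<dots> = z \<bullet> a" using bij_is_inj[OF assms(2)] by simp
  finally show ?thesis by (simp only: inner_commute)
qed

lemma supporting_face_of_unit_ball:
  assumes N: "is_norm N" and b: "\<And>y. b \<bullet> y \<le> N y"
  shows "(unit_ball N \<inter> {y. b \<bullet> y = 1}) face_of unit_ball N"
    "unit_ball N \<inter> {y. b \<bullet> y = 1} \<noteq> unit_ball N"
proof -
  have "b \<bullet> y \<le> 1" if "y \<in> unit_ball N" for y
    using b[of y] that by (simp add: unit_ball_def)
  then show "(unit_ball N \<inter> {y. b \<bullet> y = 1}) face_of unit_ball N"
    by (rule face_of_Int_supporting_hyperplane_le[OF convex_unit_ball[OF N]])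
  have "0 \<notin> {y. b \<bullet> y = 1}" by simp
  then show "unit_ball N \<inter> {y. b \<bullet> y = 1} \<noteq> unit_ball N"
    using zero_in_unit_ball[OF N] by blast
qed

lemma norm_linear_image_proper_face_pos:
  fixes NX :: "'a::euclidean_space \<Rightarrow> real" and NY :: "'b::real_vector \<Rightarrow> real"
  assumes NX: "is_norm NX" and NY: "is_norm NY" and F: "F face_of unit_ball NX" "F \<noteq> unit_ball NX"
    and T: "linear T" "inj T" and u: "u \<in> F"
  shows "NY (T u) > 0"
proof -
  have "NX u = 1" by (rule proper_face_of_unit_ball_norm_eq_1[OF NX F u])
  then have "u \<noteq> 0" using is_normD(2)[OF NX, of u] by auto
  then have "T u \<noteq> 0" using linear_injective_0[OF T(1)] T(2) by blast
  then show ?thesis using is_normD(1,2)[OF NY, of "T u"] by linarith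
qed

text \<open>b is the functional y \<mapsto> \<parallel>Tu\<parallel> (a \<bullet> T\<inverse>y) of the proof idea, written via the adjoint.\<close>
lemma bj_preserving_supporting_functional:
  fixes NX NY :: "'a::euclidean_space \<Rightarrow> real"
  assumes NX: "is_norm NX" and NY: "is_norm NY"
    and F: "F face_of unit_ball NX" "F \<noteq> unit_ball NX" and aF: "affine hull F = {x. a \<bullet> x = 1}"
    and T: "linear T" "bij T" and pres: "\<forall>x \<in> rel_interior F. preserves_bj_at NX NY T x"
    and u: "u \<in> rel_interior F"
  defines "b \<equiv> NY (T u) *\<^sub>R adjoint (inv T) a"
  shows "b \<bullet> y \<le> NY y"
    and "(\<lambda>x. (1 / NY (T u)) *\<^sub>R T x) ` rel_interior F \<subseteq> {y. NY y = 1 \<and> b \<bullet> y = 1}"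
proof -
  have Fu: "u \<in> F" using u rel_interior_subset by blast
  have c: "NY (T u) > 0"
    using norm_linear_image_proper_face_pos[OF NX NY F T(1) bij_is_inj[OF T(2)] Fu] .
  have b: "b \<bullet> T z = NY (T u) * (a \<bullet> z)" for z
    using adjoint_inv_inner_bij_linear[OF T] by (simp add: b_def)
  have "b \<bullet> T z \<le> NY (T z)" for z
    using bj_preserving_functional_bound[OF NX NY F aF T(1) Fu] pres u b by simp
  then show "b \<bullet> y \<le> NY y" by (metis T(2) bij_is_surj surj_f_inv_f)
  show "(\<lambda>x. (1 / NY (T u)) *\<^sub>R T x) ` rel_interior F \<subseteq> {y. NY y = 1 \<and> b \<bullet> y = 1}"
  proof clarify
    fix x assume x: "x \<in> rel_interior F"
    have Fx: "x \<in> F" using x rel_interior_subset by blast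
    have "NY (T x) = NY (T u)"
      using bj_preserving_norm_eq_on_face[OF NX F T(1) Fx _ Fu] pres x u by blast
    moreover have "a \<bullet> x = 1" using aF hull_inc[OF Fx] by blast
    ultimately show "NY ((1 / NY (T u)) *\<^sub>R T x) = 1 \<and> b \<bullet> ((1 / NY (T u)) *\<^sub>R T x) = 1"
      using c b[of x] by (simp add: is_normD(3)[OF NY])
  qed
qed

lemma facet_of_containing_relatively_open:
  fixes K :: "'a::euclidean_space set"
  assumes K: "convex K" and G: "G face_of K" "G \<noteq> K"
    and S: "S \<subseteq> G" "S \<noteq> {}" "rel_interior S = S" "aff_dim S = aff_dim K - 1"
  shows "G facet_of K" "S \<subseteq> rel_interior G"
proof -
  have "aff_dim G < aff_dim K" using face_of_aff_dim_lt[OF K G] .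
  moreover have "aff_dim S \<le> aff_dim G" using aff_dim_subset[OF S(1)] .
  ultimately have dim: "aff_dim G = aff_dim K - 1" using S(4) by linarith
  then show "G facet_of K" using G S(1,2) by (auto simp: facet_of_def)
  have "affine hull S = affine hull G"
    using S dim by (intro affine_dim_equal) (auto simp: hull_mono)
  then show "S \<subseteq> rel_interior G" using subset_rel_interior[OF S(1)] S(3) by simp
qed

lemma injective_linear_image_rel_interior:
  fixes f :: "'a::euclidean_space \<Rightarrow> 'b::euclidean_space"
  assumes f: "linear f" "inj f" and F: "convex F"
  shows "rel_interior (f ` rel_interior F) = f ` rel_interior F"
    "aff_dim (f ` rel_interior F) = aff_dim F"
proof -
  have "bounded_linear f" using f(1) linear_conv_bounded_linear by blast
  then show "rel_interior (f ` rel_interior F) = f ` rel_interior F"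
    using rel_interior_injective_linear_image[OF _ f(2)] rel_interior_rel_interior[OF F] by simp
  show "aff_dim (f ` rel_interior F) = aff_dim F"
    using f rel_interior_aff_dim[OF F] by simp
qed

theorem mainTheorem16:
  fixes NX NY :: "real ^ 'n \<Rightarrow> real"
    and T :: "real ^ 'n \<Rightarrow> real ^ 'n"
    and F :: "(real ^ 'n) set"
    and u :: "real ^ 'n"
  assumes "is_norm NX" and "is_norm NY"
    and "polyhedral NX" and "polyhedral NY"
    and "F facet_of unit_ball NX"
    and "linear T" and "bij T"
    and "\<forall>x \<in> rel_interior F. preserves_bj_at NX NY T x"
    and "u \<in> rel_interior F"
  shows "\<exists>G. G facet_of unit_ball NY \<and>
           (\<lambda>x. (1 / NY (T u)) *\<^sub>R T x) ` rel_interior F \<subseteq> rel_interior G"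
proof -
  note NX = assms(1) and NY = assms(2) and T = assms(6,7) and u = assms(9)
  have face: "F face_of unit_ball NX" "F \<noteq> unit_ball NX" "convex F"
    and dimF: "aff_dim F = aff_dim (unit_ball NX) - 1"
    using assms(5) by (auto simp: facet_of_def face_of_imp_convex)
  obtain a where aF: "affine hull F = {x. a \<bullet> x = 1}"
    using facet_of_unit_ball_affine_hull[OF NX assms(5)] by blast
  define b where "b = NY (T u) *\<^sub>R adjoint (inv T) a"
  define G where "G = unit_ball NY \<inter> {y. b \<bullet> y = 1}"
  define f where "f = (\<lambda>x. (1 / NY (T u)) *\<^sub>R T x)"
  note supporting = bj_preserving_supporting_functional[OF NX NY face(1,2) aF T assms(8) u,
      folded b_def f_def]
  have G: "G face_of unit_ball NY" "G \<noteq> unit_ball NY"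
    using supporting_face_of_unit_ball[OF NY supporting(1)] by (simp_all add: G_def)
  have "NY (T u) > 0" using norm_linear_image_proper_face_pos[OF NX NY face(1,2) T(1)]
      bij_is_inj[OF T(2)] u rel_interior_subset by blast
  then have f: "linear f" "inj f"
    unfolding f_def using linear_compose_scale_right[OF T(1)] bij_is_inj[OF T(2)]
    by (simp_all add: inj_on_def)
  have "f ` rel_interior F \<subseteq> G" using supporting(2) by (auto simp: G_def unit_ball_def)
  moreover have "f ` rel_interior F \<noteq> {}" using u by blast
  moreover have "rel_interior (f ` rel_interior F) = f ` rel_interior F"
    and "aff_dim (f ` rel_interior F) = aff_dim (unit_ball NY) - 1"
    using injective_linear_image_rel_interior[OF f face(3)] dimF
      aff_dim_unit_ball[OF NX] aff_dim_unit_ball[OF NY] by simp_all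
  ultimately have "G facet_of unit_ball NY" "f ` rel_interior F \<subseteq> rel_interior G"
    using facet_of_containing_relatively_open[OF convex_unit_ball[OF NY] G] by blast+
  then show ?thesis unfolding f_def by blast
qed

end
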